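(* Let $f:\mathbb{R}^d\to\mathbb{R}$ be convex and differentiable with $L$-Lipschitz gradient ($L>0$), let $h:\mathbb{R}^d\to\mathbb{R}\cup\{+\infty\}$ be proper, closed and convex, let $F=f+h$, and assume $F$ has bounded level sets and a minimizer $x^*$. (a) For every $x\in\mathbb{R}^d$, the value $\lambda=1/(3L)$ satisfies the linesearch condition $\mathrm{(LS)}(x,\lambda)$. (b) Let $x_0\in\mathbb{R}^d$ and define iteratively $x_{k+1}=x_k-\lambda_k G^{f}_{\lambda_k h}(x_k)$, where $\lambda_k=\max\{\lambda>0:\ \mathrm{(LS)}(x_k,\lambda)\text{ holds}\}$ (assumed to be attained). Then $\lambda_k\ge 1/(3L)$ for all $k$, and there is a constant $D$ depending only on $x_0$, $x^*$ and $L$ such that $F(x_k)-F(x^* )\le D/k$ for all $k\ge1$.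
   Context: $\mathbb{R}^d$ carries the standard inner product $\langle\cdot,\cdot\rangle$ and Euclidean norm $\|\cdot\|$. For $\lambda>0$ the proximal operator is $\mathrm{prox}_{\lambda h}(w)=\arg\min_{u\in\mathbb{R}^d}\big\{\lambda h(u)+\tfrac12\|u-w\|^2\big\}$. The gradient mapping is $G^{f}_{\lambda h}(x)=\frac{1}{\lambda}\Big(x-\mathrm{prox}_{\lambda h}\big(x-\lambda\nabla f(x)\big)\Big)$. For $x\in\mathbb{R}^d$ and $\lambda>0$, the linesearch condition $\mathrm{(LS)}(x,\lambda)$ is: with $G=G^{f}_{\lambda h}(x)$, $f(x-2\lambda G)\le f(x-\lambda G)-\lambda\langle G,\nabla f(x)\rangle+\tfrac{\lambda}{2}\|G\|^2$. *)

theory Defs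
  imports "HOL-Analysis.Analysis"
begin

definition proper_fun :: "('a \<Rightarrow> ereal) \<Rightarrow> bool" where
  "proper_fun h \<longleftrightarrow> (\<exists>x. h x < \<infinity>) \<and> (\<forall>x. h x \<noteq> -\<infinity>)"

definition epigraph :: "('a \<Rightarrow> ereal) \<Rightarrow> ('a \<times> real) set" where
  "epigraph h = {(x, t). h x \<le> ereal t}"

definition closed_fun :: "('a::topological_space \<Rightarrow> ereal) \<Rightarrow> bool" where
  "closed_fun h \<longleftrightarrow> closed (epigraph h)"

definition convex_fun :: "('a::real_vector \<Rightarrow> ereal) \<Rightarrow> bool" where
  "convex_fun h \<longleftrightarrow> convex (epigraph h)"

text \<open>prox_{lam h}(w) = argmin_u { lam h(u) + 1/2 |u - w|^2 }
  (unique for proper closed convex h and lam > 0).\<close>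

definition prox :: "real \<Rightarrow> ('a::real_normed_vector \<Rightarrow> ereal) \<Rightarrow> 'a \<Rightarrow> 'a" where
  "prox lam h w = (SOME u. \<forall>v. ereal lam * h u + ereal ((norm (u - w))\<^sup>2 / 2)
                               \<le> ereal lam * h v + ereal ((norm (v - w))\<^sup>2 / 2))"

definition grad_map :: "('a::real_normed_vector \<Rightarrow> 'a) \<Rightarrow> real \<Rightarrow> ('a \<Rightarrow> ereal) \<Rightarrow> 'a \<Rightarrow> 'a" where
  "grad_map gradf lam h x = (1 / lam) *\<^sub>R (x - prox lam h (x - lam *\<^sub>R gradf x))"

definition LS :: "('a::real_inner \<Rightarrow> real) \<Rightarrow> ('a \<Rightarrow> 'a) \<Rightarrow> ('a \<Rightarrow> ereal) \<Rightarrow> 'a \<Rightarrow> real \<Rightarrow> bool" where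
  "LS f gradf h x lam \<longleftrightarrow>
     (let G = grad_map gradf lam h x in
       f (x - (2 * lam) *\<^sub>R G) \<le> f (x - lam *\<^sub>R G) - lam * inner G (gradf x) + lam / 2 * (norm G)\<^sup>2)"

definition setting :: "('a::euclidean_space \<Rightarrow> real) \<Rightarrow> ('a \<Rightarrow> 'a) \<Rightarrow> ('a \<Rightarrow> ereal) \<Rightarrow> real \<Rightarrow> 'a \<Rightarrow> bool" where
  "setting f gradf h L xs \<longleftrightarrow>
     convex_on UNIV f \<and>
     (\<forall>x. (f has_derivative (\<lambda>v. inner (gradf x) v)) (at x)) \<and>
     (\<forall>x y. norm (gradf x - gradf y) \<le> L * norm (x - y)) \<and>
     proper_fun h \<and> closed_fun h \<and> convex_fun h \<and>
     (\<forall>c::real. bounded {x. ereal (f x) + h x \<le> ereal c}) \<and>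
     (\<forall>x. ereal (f xs) + h xs \<le> ereal (f x) + h x)"

definition ls_iterates :: "('a::euclidean_space \<Rightarrow> real) \<Rightarrow> ('a \<Rightarrow> 'a) \<Rightarrow> ('a \<Rightarrow> ereal) \<Rightarrow> 'a
     \<Rightarrow> (nat \<Rightarrow> 'a) \<Rightarrow> (nat \<Rightarrow> real) \<Rightarrow> bool" where
  "ls_iterates f gradf h x0 x lam \<longleftrightarrow>
     x 0 = x0 \<and>
     (\<forall>k. lam k > 0 \<and> LS f gradf h (x k) (lam k) \<and>
          (\<forall>\<mu>>0. LS f gradf h (x k) \<mu> \<longrightarrow> \<mu> \<le> lam k)) \<and>
     (\<forall>k. x (Suc k) = x k - lam k *\<^sub>R grad_map gradf (lam k) h (x k))"

end

theory Submission
  imports Defs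
begin

text \<open>
  For \<open>\<lambda> = 1/(3L)\<close>, the descent lemma at \<open>y = x - \<lambda>G\<close>, together with the Lipschitz bound
  \<open>\<langle>\<nabla>f x - \<nabla>f y, G\<rangle> \<le> L\<lambda>\<parallel>G\<parallel>\<^sup>2\<close>, gives (LS) with excess \<open>3L\<lambda>\<^sup>2/2 \<parallel>G\<parallel>\<^sup>2 = \<lambda>/2 \<parallel>G\<parallel>\<^sup>2\<close>;
  maximality of \<open>\<lambda>\<^sub>k\<close> then forces \<open>\<lambda>\<^sub>k \<ge> 1/(3L)\<close>.
  Since \<open>x - \<lambda>G\<close> is the midpoint of \<open>x\<close> and \<open>x - 2\<lambda>G\<close>, convexity of \<open>f\<close> turns (LS) into the
  sufficient-decrease inequality \<open>f(x\<^sup>+) \<le> f x + \<langle>\<nabla>f x, x\<^sup>+ - x\<rangle> + \<parallel>x\<^sup>+ - x\<parallel>\<^sup>2/(2\<lambda>)\<close>, which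
  is all the classical proximal-gradient three-point inequality needs. Telescoping that
  inequality against \<open>x\<^sup>*\<close> gives \<open>F(x\<^sub>k) - F(x\<^sup>*) \<le> 3L\<parallel>x\<^sub>0 - x\<^sup>*\<parallel>\<^sup>2/(2k)\<close>.
\<close>

section \<open>Smooth convex functions\<close>

lemma has_real_derivative_along_line:
  fixes f :: "'a::real_inner \<Rightarrow> real"
  assumes "\<And>x. (f has_derivative (\<lambda>v. inner (g x) v)) (at x)"
  shows "((\<lambda>t. f (y + t *\<^sub>R v)) has_real_derivative inner (g (y + t *\<^sub>R v)) v) (at t)"
proof -
  have "((\<lambda>t. y + t *\<^sub>R v) has_derivative (\<lambda>s. s *\<^sub>R v)) (at t)"
    by (auto intro!: derivative_eq_intros)
  from has_derivative_compose[OF this assms]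
  have "((\<lambda>t. f (y + t *\<^sub>R v)) has_derivative (\<lambda>s. inner (g (y + t *\<^sub>R v)) (s *\<^sub>R v))) (at t)" .
  moreover have "(\<lambda>s. inner (g (y + t *\<^sub>R v)) (s *\<^sub>R v)) = (*) (inner (g (y + t *\<^sub>R v)) v)"
    by (auto simp: fun_eq_iff)
  ultimately show ?thesis unfolding has_field_derivative_def by simp
qed

lemma descent_lemma:
  fixes f :: "'a::real_inner \<Rightarrow> real"
  assumes d: "\<And>x. (f has_derivative (\<lambda>v. inner (g x) v)) (at x)"
    and lip: "\<And>x y. norm (g x - g y) \<le> L * norm (x - y)"
  shows "f (y + v) \<le> f y + inner (g y) v + L / 2 * (norm v)\<^sup>2"
proof -
  define \<phi> where "\<phi> t = f (y + t *\<^sub>R v) - t * inner (g y) v - L * t\<^sup>2 / 2 * (norm v)\<^sup>2" for t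
  have "\<phi> 1 \<le> \<phi> 0"
  proof (rule DERIV_nonpos_imp_nonincreasing[where f = \<phi>])
    fix t :: real assume t: "0 \<le> t" "t \<le> 1"
    define \<phi>' where "\<phi>' = inner (g (y + t *\<^sub>R v)) v - inner (g y) v - L * t * (norm v)\<^sup>2"
    have "(\<phi> has_real_derivative \<phi>') (at t)"
      unfolding \<phi>_def \<phi>'_def
      by (intro DERIV_diff has_real_derivative_along_line[OF d]) (auto intro!: derivative_eq_intros)
    moreover have "\<phi>' \<le> 0"
    proof -
      have "inner (g (y + t *\<^sub>R v)) v - inner (g y) v = inner (g (y + t *\<^sub>R v) - g y) v"
        by (simp add: inner_diff_left)
      also have "\<dots> \<le> norm (g (y + t *\<^sub>R v) - g y) * norm v" by (rule norm_cauchy_schwarz)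
      also have "\<dots> \<le> L * norm (t *\<^sub>R v) * norm v"
        using lip[of "y + t *\<^sub>R v" y] by (intro mult_right_mono) auto
      also have "\<dots> = L * t * (norm v)\<^sup>2" using t by (simp add: power2_eq_square)
      finally show ?thesis unfolding \<phi>'_def by simp
    qed
    ultimately show "\<exists>y. (\<phi> has_real_derivative y) (at t) \<and> y \<le> 0" by blast
  qed simp
  then show ?thesis unfolding \<phi>_def by simp
qed

lemma convex_on_above_gradient_tangent:
  fixes f :: "'a::real_inner \<Rightarrow> real"
  assumes c: "convex_on UNIV f" and d: "\<And>x. (f has_derivative (\<lambda>v. inner (g x) v)) (at x)"
  shows "f x + inner (g x) (u - x) \<le> f u"
proof -
  define \<phi> where "\<phi> t = f (x + t *\<^sub>R (u - x))" for t
  have cv: "convex_on UNIV \<phi>"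
  proof (rule convex_onI)
    fix t a b :: real assume t: "0 < t" "t < 1"
    have "x + ((1 - t) *\<^sub>R a + t *\<^sub>R b) *\<^sub>R (u - x)
        = (1 - t) *\<^sub>R (x + a *\<^sub>R (u - x)) + t *\<^sub>R (x + b *\<^sub>R (u - x))"
      by (simp add: algebra_simps)
    then show "\<phi> ((1 - t) *\<^sub>R a + t *\<^sub>R b) \<le> (1 - t) * \<phi> a + t * \<phi> b"
      unfolding \<phi>_def using convex_onD[OF c, of t] t by simp
  qed simp
  have D: "(\<phi> has_field_derivative inner (g x) (u - x)) (at 0 within UNIV)"
    unfolding \<phi>_def using has_real_derivative_along_line[OF d, of x "u - x" 0] by simp
  have "inner (g x) (u - x) * (1 - 0) \<le> \<phi> 1 - \<phi> 0"
    by (rule convex_on_imp_above_tangent[OF cv _ _ _ D]) auto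
  then show ?thesis unfolding \<phi>_def by simp
qed

lemma LS_at_inverse_3L:
  fixes f :: "'a::real_inner \<Rightarrow> real"
  assumes d: "\<And>x. (f has_derivative (\<lambda>v. inner (g x) v)) (at x)"
    and lip: "\<And>x y. norm (g x - g y) \<le> L * norm (x - y)" and L: "L > 0"
  shows "LS f g h x (1 / (3 * L))"
proof -
  define lam where "lam = 1 / (3 * L)"
  define G where "G = grad_map g lam h x"
  define y where "y = x - lam *\<^sub>R G"
  have lam: "lam > 0" using L by (simp add: lam_def)
  have "x - (2 * lam) *\<^sub>R G = y + - (lam *\<^sub>R G)"
    by (simp add: y_def algebra_simps flip: scaleR_add_left)
  then have "f (x - (2 * lam) *\<^sub>R G) \<le> f y + inner (g y) (- (lam *\<^sub>R G)) + L / 2 * (norm (lam *\<^sub>R G))\<^sup>2"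
    using descent_lemma[OF d lip, of y "- (lam *\<^sub>R G)"] by simp
  moreover have "inner (g y) (- (lam *\<^sub>R G)) = - lam * inner G (g x) + lam * inner (g x - g y) G"
    by (simp add: inner_diff_left inner_commute algebra_simps)
  moreover have "lam * inner (g x - g y) G \<le> lam * (L * lam * (norm G)\<^sup>2)"
  proof (rule mult_left_mono)
    have "inner (g x - g y) G \<le> norm (g x - g y) * norm G" by (rule norm_cauchy_schwarz)
    also have "\<dots> \<le> L * norm (x - y) * norm G" using lip[of x y] by (intro mult_right_mono) auto
    also have "\<dots> = L * lam * (norm G)\<^sup>2" using lam by (simp add: y_def power2_eq_square)
    finally show "inner (g x - g y) G \<le> L * lam * (norm G)\<^sup>2" .
  qed (use lam in simp)
  ultimately have "f (x - (2 * lam) *\<^sub>R G) \<le> f y - lam * inner G (g x) + 3 / 2 * L * lam\<^sup>2 * (norm G)\<^sup>2"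
    by (simp add: power2_eq_square algebra_simps inner_commute)
  moreover have "3 / 2 * L * lam\<^sup>2 * (norm G)\<^sup>2 = lam / 2 * (norm G)\<^sup>2"
    using L by (simp add: lam_def power2_eq_square)
  ultimately show ?thesis
    unfolding LS_def Let_def lam_def[symmetric] G_def[symmetric] y_def[symmetric] by linarith
qed

lemma LS_imp_sufficient_decrease:
  fixes f :: "'a::real_inner \<Rightarrow> real"
  assumes "convex_on UNIV f" and "LS f g h x lam"
  shows "f (x - lam *\<^sub>R grad_map g lam h x)
           \<le> f x - lam * inner (grad_map g lam h x) (g x) + lam / 2 * (norm (grad_map g lam h x))\<^sup>2"
proof -
  define G where "G = grad_map g lam h x"
  have "x - lam *\<^sub>R G = (1 - 1 / 2) *\<^sub>R x + (1 / 2) *\<^sub>R (x - (2 * lam) *\<^sub>R G)"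
    by (simp add: algebra_simps flip: scaleR_add_left)
  then have "f (x - lam *\<^sub>R G) \<le> (1 - 1 / 2) * f x + 1 / 2 * f (x - (2 * lam) *\<^sub>R G)"
    using convex_onD[OF assms(1), of "1 / 2" x "x - (2 * lam) *\<^sub>R G"] by simp
  moreover have "f (x - (2 * lam) *\<^sub>R G) \<le> f (x - lam *\<^sub>R G) - lam * inner G (g x) + lam / 2 * (norm G)\<^sup>2"
    using assms(2) unfolding LS_def Let_def G_def .
  ultimately show ?thesis unfolding G_def[symmetric] by simp
qed

section \<open>Proximal operator of a proper closed convex function\<close>

definition prox_objective :: "real \<Rightarrow> ('a::real_normed_vector \<Rightarrow> ereal) \<Rightarrow> 'a \<Rightarrow> 'a \<Rightarrow> ereal" where
  "prox_objective lam h w u = ereal lam * h u + ereal ((norm (u - w))\<^sup>2 / 2)"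

lemma prox_eq_Eps_prox_objective:
  "prox lam h w = (SOME u. \<forall>v. prox_objective lam h w u \<le> prox_objective lam h w v)"
  by (simp add: prox_def prox_objective_def)

lemma proper_fun_finite:
  assumes "proper_fun h" "h u \<noteq> \<infinity>"
  obtains r where "h u = ereal r"
  using assms unfolding proper_fun_def by (cases "h u") auto

lemma proper_fun_obtain_finite:
  assumes "proper_fun h"
  obtains a r where "h a = ereal r"
  using assms proper_fun_finite unfolding proper_fun_def by (metis less_irrefl)

text \<open>Strict separation of a point lying below the closed convex epigraph.\<close>

lemma proper_closed_convex_affine_minorant:
  fixes h :: "'a::euclidean_space \<Rightarrow> ereal"
  assumes pr: "proper_fun h" and cl: "closed_fun h" and cv: "convex_fun h"
  obtains v c where "\<And>u. ereal (inner v u + c) \<le> h u"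
proof -
  obtain a ha where ha: "h a = ereal ha" using proper_fun_obtain_finite[OF pr] by blast
  have "(a, ha - 1) \<notin> epigraph h" using ha by (simp add: epigraph_def)
  then obtain p s b where sep: "inner p a + s * (ha - 1) < b"
      "\<And>u t. (u, t) \<in> epigraph h \<Longrightarrow> inner p u + s * t > b"
    using separating_hyperplane_closed_point[of "epigraph h" "(a, ha - 1)"] cl cv
    unfolding closed_fun_def convex_fun_def by fastforce
  have "inner p a + s * ha > b" using sep(2)[of a ha] ha by (simp add: epigraph_def)
  with sep(1) have s: "s > 0" by (simp add: algebra_simps)
  have "ereal (inner (- (1 / s) *\<^sub>R p) u + b / s) \<le> h u" for u
  proof (cases "h u")
    case (real r)
    then have "inner p u + s * r > b" using sep(2)[of u r] by (simp add: epigraph_def)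
    then have "b / s - inner p u / s < r" using s by (simp add: field_simps)
    then show ?thesis using real by (simp add: algebra_simps)
  qed (use pr in \<open>auto simp: proper_fun_def\<close>)
  then show thesis by (rule that)
qed

lemma closed_prox_objective_sublevel:
  fixes h :: "'a::euclidean_space \<Rightarrow> ereal"
  assumes cl: "closed_fun h" and lam: "lam > 0"
  shows "closed {u. prox_objective lam h w u \<le> ereal r}"
proof -
  have "prox_objective lam h w u \<le> ereal r \<longleftrightarrow> h u \<le> ereal ((r - (norm (u - w))\<^sup>2 / 2) / lam)" for u
    using lam by (cases "h u") (auto simp: prox_objective_def field_simps)
  then have "{u. prox_objective lam h w u \<le> ereal r}
      = (\<lambda>u. (u, (r - (norm (u - w))\<^sup>2 / 2) / lam)) -` epigraph h"
    by (auto simp: epigraph_def)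
  moreover have "closed ((\<lambda>u. (u, (r - (norm (u - w))\<^sup>2 / 2) / lam)) -` epigraph h)"
    using cl lam by (intro continuous_closed_vimage continuous_intros) (simp_all add: closed_fun_def)
  ultimately show ?thesis by simp
qed

lemma half_square_le_affine_bound:
  fixes s A B :: real
  assumes "s\<^sup>2 / 2 \<le> A + B * s" "B \<ge> 0" "s \<ge> 0"
  shows "s \<le> 2 * B + 2 * \<bar>A\<bar> + 1"
proof (rule ccontr)
  assume "\<not> ?thesis"
  then have s: "s > 2 * B + 2 * \<bar>A\<bar> + 1" by simp
  then have "s * s / 2 > s * (2 * B + 2 * \<bar>A\<bar> + 1) / 2" using assms
    by (intro divide_strict_right_mono mult_strict_left_mono) auto
  moreover have "s * \<bar>A\<bar> \<ge> 1 * \<bar>A\<bar>" using s assms by (intro mult_right_mono) auto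
  ultimately show False using assms s by (simp add: power2_eq_square algebra_simps)
qed

lemma bounded_prox_objective_sublevel:
  fixes h :: "'a::euclidean_space \<Rightarrow> ereal"
  assumes pr: "proper_fun h" and cl: "closed_fun h" and cv: "convex_fun h" and lam: "lam > 0"
  shows "bounded {u. prox_objective lam h w u \<le> ereal r}"
proof -
  obtain v c where vc: "\<And>u. ereal (inner v u + c) \<le> h u"
    using proper_closed_convex_affine_minorant[OF pr cl cv] by blast
  define B where "B = lam * norm v"
  define A where "A = r - lam * c - lam * inner v w"
  have "norm (u - w) \<le> 2 * B + 2 * \<bar>A\<bar> + 1" if u: "prox_objective lam h w u \<le> ereal r" for u
  proof (rule half_square_le_affine_bound)
    have "ereal lam * ereal (inner v u + c) \<le> ereal lam * h u"
      using vc lam by (intro ereal_mult_left_mono) auto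
    from add_right_mono[OF this, of "ereal ((norm (u - w))\<^sup>2 / 2)"]
    have "ereal (lam * (inner v u + c) + (norm (u - w))\<^sup>2 / 2) \<le> prox_objective lam h w u"
      unfolding prox_objective_def by simp
    with u have "lam * (inner v u + c) + (norm (u - w))\<^sup>2 / 2 \<le> r"
      using order_trans ereal_less_eq(3) by metis
    moreover have "- (norm v * norm (u - w)) \<le> inner v (u - w)"
      using norm_cauchy_schwarz[of "- v" "u - w"] by simp
    from mult_left_mono[OF this, of lam] lam
    have "- (B * norm (u - w)) \<le> lam * inner v u - lam * inner v w"
      by (simp add: B_def inner_diff_right algebra_simps)
    ultimately show "(norm (u - w))\<^sup>2 / 2 \<le> A + B * norm (u - w)"
      unfolding A_def by (simp add: algebra_simps)
  qed (use lam in \<open>auto simp: B_def\<close>)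
  then have "{u. prox_objective lam h w u \<le> ereal r} \<subseteq> cball w (2 * B + 2 * \<bar>A\<bar> + 1)"
    by (auto simp: dist_norm norm_minus_commute)
  then show ?thesis using bounded_cball bounded_subset by blast
qed

text \<open>Compactness of one sublevel set: if no minimiser existed, the open sets
  \<open>{\<phi> > r}\<close> with \<open>r\<close> above some value of \<open>\<phi>\<close> would cover it, and a finite subcover
  would miss the point realising the smallest such \<open>r\<close>.\<close>

lemma closed_sublevels_attain_min:
  fixes \<phi> :: "'a::heine_borel \<Rightarrow> ereal"
  assumes closed: "\<And>r. closed {u. \<phi> u \<le> ereal r}"
    and bounded: "bounded {u. \<phi> u \<le> ereal c}" and a: "\<phi> a \<le> ereal c"
  obtains p where "\<And>v. \<phi> p \<le> \<phi> v"
proof (rule ccontr)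
  assume "\<not> thesis"
  then have below: "\<exists>v. \<phi> v < \<phi> p" for p
    using that by (meson not_le)
  define K where "K = {u. \<phi> u \<le> ereal c}"
  define R where "R = {r. r \<le> c \<and> (\<exists>v. \<phi> v < ereal r)}"
  have "compact K" unfolding K_def compact_eq_bounded_closed using closed bounded by blast
  moreover have "open (- {u. \<phi> u \<le> ereal r})" for r using closed by blast
  moreover have "K \<subseteq> (\<Union>r\<in>R. - {u. \<phi> u \<le> ereal r})"
  proof
    fix p assume p: "p \<in> K"
    obtain v where "\<phi> v < \<phi> p" using below by blast
    then obtain r where r: "\<phi> v < ereal r" "ereal r < \<phi> p" using ereal_dense2 by blast
    with p have "r \<in> R" unfolding K_def R_def
      by (metis ereal_less_eq(3) less_imp_le mem_Collect_eq order_trans)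
    with r show "p \<in> (\<Union>r\<in>R. - {u. \<phi> u \<le> ereal r})" by (auto simp: not_le)
  qed
  ultimately obtain R' where R': "R' \<subseteq> R" "finite R'" "K \<subseteq> (\<Union>r\<in>R'. - {u. \<phi> u \<le> ereal r})"
    by (rule compactE_image)
  have "R' \<noteq> {}" using R'(3) a unfolding K_def by auto
  then have "Min R' \<in> R" using R'(1,2) Min_in by blast
  then obtain v where v: "\<phi> v < ereal (Min R')" "Min R' \<le> c" unfolding R_def by blast
  then have "\<phi> v \<le> ereal c" by (metis ereal_less_eq(3) less_imp_le order_trans)
  then have "v \<in> K" unfolding K_def by simp
  then obtain r where "r \<in> R'" "ereal r < \<phi> v" using R'(3) by force
  moreover from \<open>r \<in> R'\<close> have "ereal (Min R') \<le> ereal r" using Min_le[OF R'(2)] by simp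
  ultimately show False using v(1) by (meson le_less_trans order_less_asym)
qed

lemma prox_minimizes:
  fixes h :: "'a::euclidean_space \<Rightarrow> ereal"
  assumes pr: "proper_fun h" and cl: "closed_fun h" and cv: "convex_fun h" and lam: "lam > 0"
  shows "prox_objective lam h w (prox lam h w) \<le> prox_objective lam h w v"
proof -
  obtain a r where "h a = ereal r" using proper_fun_obtain_finite[OF pr] by blast
  then have a: "prox_objective lam h w a \<le> ereal (lam * r + (norm (a - w))\<^sup>2 / 2)"
    by (simp add: prox_objective_def)
  obtain p where "\<And>v. prox_objective lam h w p \<le> prox_objective lam h w v"
    using closed_sublevels_attain_min[OF closed_prox_objective_sublevel[OF cl lam]
        bounded_prox_objective_sublevel[OF assms] a] by blast
  then have "\<exists>p. \<forall>v. prox_objective lam h w p \<le> prox_objective lam h w v" by blast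
  from someI_ex[OF this] show ?thesis unfolding prox_eq_Eps_prox_objective by blast
qed

lemma prox_finite:
  fixes h :: "'a::euclidean_space \<Rightarrow> ereal"
  assumes pr: "proper_fun h" and cl: "closed_fun h" and cv: "convex_fun h" and lam: "lam > 0"
  obtains hp where "h (prox lam h w) = ereal hp"
proof -
  obtain a z where a: "h a = ereal z" using proper_fun_obtain_finite[OF pr] by blast
  have "h (prox lam h w) \<noteq> \<infinity>"
  proof
    assume "h (prox lam h w) = \<infinity>"
    with prox_minimizes[OF assms, of w a] a lam show False by (simp add: prox_objective_def)
  qed
  then show thesis using proper_fun_finite[OF pr] that by blast
qed

lemma le_of_forall_le_add_mult:
  fixes a b C :: real
  assumes le: "\<And>t. 0 < t \<Longrightarrow> t \<le> 1 \<Longrightarrow> a \<le> b + t * C" and C: "C \<ge> 0"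
  shows "a \<le> b"
proof (rule field_le_epsilon)
  fix e :: real assume e: "0 < e"
  define t where "t = min 1 (e / (C + 1))"
  have t: "0 < t" "t \<le> 1" using e C by (auto simp: t_def)
  have "t * C \<le> e / (C + 1) * C" using C by (intro mult_right_mono) (auto simp: t_def)
  also have "\<dots> \<le> e" using e C by (simp add: field_simps)
  finally show "a \<le> b + e" using le[OF t] by linarith
qed

lemma power2_norm_add_scaleR:
  fixes a b :: "'a::real_inner"
  shows "(norm (a + t *\<^sub>R b))\<^sup>2 = (norm a)\<^sup>2 + 2 * t * inner a b + t\<^sup>2 * (norm b)\<^sup>2"
  unfolding power2_norm_eq_inner
  by (simp add: inner_add_left inner_add_right inner_commute algebra_simps power2_eq_square)

text \<open>Compare the prox point \<open>p\<close> with \<open>(1 - t) p + t u\<close> and let \<open>t \<rightarrow> 0\<close>.\<close>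

lemma prox_variational_inequality:
  fixes h :: "'a::euclidean_space \<Rightarrow> ereal" and w :: 'a
  assumes pr: "proper_fun h" and cl: "closed_fun h" and cv: "convex_fun h" and lam: "lam > 0"
  defines "p \<equiv> prox lam h w"
  assumes hp: "h p = ereal hp" and hu: "h u = ereal z"
  shows "lam * hp \<le> lam * z + inner (p - w) (u - p)"
proof (rule le_of_forall_le_add_mult)
  fix t :: real assume t: "0 < t" "t \<le> 1"
  define y where "y = (1 - t) *\<^sub>R p + t *\<^sub>R u"
  have "(p, hp) \<in> epigraph h" "(u, z) \<in> epigraph h" using hp hu by (auto simp: epigraph_def)
  from convexD[OF cv[unfolded convex_fun_def] this, of "1 - t" t] t
  have "h y \<le> ereal ((1 - t) * hp + t * z)" by (simp add: y_def epigraph_def)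
  from ereal_mult_left_mono[OF this, of "ereal lam"] lam
  have "ereal lam * h y \<le> ereal (lam * ((1 - t) * hp + t * z))" by simp
  from add_right_mono[OF this, of "ereal ((norm (y - w))\<^sup>2 / 2)"]
  have "prox_objective lam h w y \<le> ereal (lam * ((1 - t) * hp + t * z) + (norm (y - w))\<^sup>2 / 2)"
    unfolding prox_objective_def by simp
  moreover have "ereal (lam * hp + (norm (p - w))\<^sup>2 / 2) \<le> prox_objective lam h w y"
    using prox_minimizes[OF pr cl cv lam, of w y] hp by (simp add: prox_objective_def p_def)
  ultimately have "lam * hp + (norm (p - w))\<^sup>2 / 2 \<le> lam * ((1 - t) * hp + t * z) + (norm (y - w))\<^sup>2 / 2"
    using order_trans ereal_less_eq(3) by metis
  moreover have "y - w = (p - w) + t *\<^sub>R (u - p)" by (simp add: y_def algebra_simps)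
  then have "(norm (y - w))\<^sup>2 = (norm (p - w))\<^sup>2 + 2 * t * inner (p - w) (u - p) + t\<^sup>2 * (norm (u - p))\<^sup>2"
    by (simp only: power2_norm_add_scaleR)
  ultimately have "t * (lam * hp) \<le> t * (lam * z + inner (p - w) (u - p) + t * ((norm (u - p))\<^sup>2 / 2))"
    by (simp add: algebra_simps power2_eq_square)
  with t show "lam * hp \<le> lam * z + inner (p - w) (u - p) + t * ((norm (u - p))\<^sup>2 / 2)" by simp
qed simp

section \<open>Convergence of the linesearch iteration\<close>

lemma grad_map_step_eq_prox:
  assumes "lam \<noteq> 0"
  shows "x - lam *\<^sub>R grad_map g lam h x = prox lam h (x - lam *\<^sub>R g x)"
  using assms by (simp add: grad_map_def)

lemma proximal_gradient_three_point:
  fixes f :: "'a::euclidean_space \<Rightarrow> real"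
  assumes cvf: "convex_on UNIV f" and d: "\<And>x. (f has_derivative (\<lambda>v. inner (g x) v)) (at x)"
    and pr: "proper_fun h" and cl: "closed_fun h" and cv: "convex_fun h" and lam: "lam > 0"
    and ls: "LS f g h x lam"
  defines "xp \<equiv> x - lam *\<^sub>R grad_map g lam h x"
  assumes hp: "h xp = ereal hp" and hu: "h u = ereal z"
  shows "f xp + hp \<le> f u + z + ((norm (x - u))\<^sup>2 - (norm (xp - u))\<^sup>2) / (2 * lam)"
proof -
  define w where "w = x - lam *\<^sub>R g x"
  define dd where "dd = xp - x"
  have G: "grad_map g lam h x = - (1 / lam) *\<^sub>R dd" using lam by (simp add: dd_def xp_def)
  have "f xp \<le> f x - lam * inner (grad_map g lam h x) (g x) + lam / 2 * (norm (grad_map g lam h x))\<^sup>2"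
    using LS_imp_sufficient_decrease[OF cvf ls] unfolding xp_def .
  then have "f xp \<le> f x + inner (g x) dd + (norm dd)\<^sup>2 / (2 * lam)"
    using lam unfolding G by (simp add: inner_commute power2_eq_square field_simps)
  moreover have "f x + inner (g x) (u - x) \<le> f u" by (rule convex_on_above_gradient_tangent[OF cvf d])
  moreover have "lam * hp \<le> lam * z + inner (xp - w) (u - xp)"
    using prox_variational_inequality[OF pr cl cv lam] hp hu lam
    by (simp add: xp_def w_def grad_map_def)
  then have "hp \<le> z + inner dd (u - xp) / lam + inner (g x) (u - xp)"
    using lam by (simp add: w_def dd_def inner_diff_left inner_diff_right inner_add_left field_simps)
  moreover have "x - u = (xp - u) + (-1) *\<^sub>R dd" by (simp add: dd_def)
  then have "(norm (x - u))\<^sup>2 - (norm (xp - u))\<^sup>2 = (norm dd)\<^sup>2 + 2 * inner dd (u - xp)"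
    by (simp only: power2_norm_add_scaleR) (simp add: inner_diff_left inner_diff_right inner_commute)
  then have "((norm (x - u))\<^sup>2 - (norm (xp - u))\<^sup>2) / (2 * lam) = (norm dd)\<^sup>2 / (2 * lam) + inner dd (u - xp) / lam"
    using lam by (simp add: field_simps)
  moreover have "inner (g x) dd - inner (g x) (u - x) + inner (g x) (u - xp) = 0"
    by (simp add: dd_def inner_diff_right)
  ultimately show ?thesis by linarith
qed

lemma telescoping_sublinear_rate:
  fixes e r lam :: "nat \<Rightarrow> real"
  assumes dec: "\<And>j. e (Suc (Suc j)) \<le> e (Suc j)" and e_nonneg: "\<And>j. 0 \<le> e (Suc j)"
    and c: "0 < c" "\<And>j. c \<le> lam j"
    and step: "\<And>j. lam j * e (Suc j) \<le> (r j - r (Suc j)) / 2" and r_nonneg: "\<And>j. 0 \<le> r j"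
    and k: "1 \<le> k"
  shows "e k \<le> r 0 / (2 * c) / real k"
proof -
  have "c * e k \<le> (r j - r (Suc j)) / 2" if "j < k" for j
  proof -
    have "e k \<le> e (Suc j)"
      using decseqD[OF decseq_SucI[of "\<lambda>j. e (Suc j)"], of j "k - 1"] dec that by simp
    then have "c * e k \<le> c * e (Suc j)" using c by simp
    also have "\<dots> \<le> lam j * e (Suc j)" using c e_nonneg by (intro mult_right_mono) auto
    finally show ?thesis using step[of j] by linarith
  qed
  then have "(\<Sum>j<k. c * e k) \<le> (\<Sum>j<k. (r j - r (Suc j)) / 2)" by (intro sum_mono) auto
  also have "\<dots> = (r 0 - r k) / 2"
    using sum_lessThan_telescope'[of r k] by (simp add: sum_divide_distrib[symmetric])
  finally have "real k * c * e k \<le> r 0 / 2" using r_nonneg[of k] by simp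
  with c k show ?thesis by (simp add: field_simps)
qed

lemma ls_iterates_rate:
  fixes f :: "'a::euclidean_space \<Rightarrow> real"
  assumes S: "setting f g h L xs" and it: "ls_iterates f g h x0 x lam"
    and c: "0 < c" "\<And>j. c \<le> lam j" and k: "1 \<le> k"
  shows "(ereal (f (x k)) + h (x k)) - (ereal (f xs) + h xs)
           \<le> ereal ((norm (x0 - xs))\<^sup>2 / (2 * c) / real k)"
proof -
  have cvf: "convex_on UNIV f" and d: "\<And>x. (f has_derivative (\<lambda>v. inner (g x) v)) (at x)"
    and pr: "proper_fun h" and cl: "closed_fun h" and cv: "convex_fun h"
    and minim: "\<And>y. ereal (f xs) + h xs \<le> ereal (f y) + h y"
    using S unfolding setting_def by auto
  have x0: "x 0 = x0" and lam: "\<And>j. lam j > 0" and ls: "\<And>j. LS f g h (x j) (lam j)"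
    and x_Suc: "\<And>j. x (Suc j) = x j - lam j *\<^sub>R grad_map g (lam j) h (x j)"
    using it unfolding ls_iterates_def by auto
  define hv where "hv j = real_of_ereal (h (x j))" for j
  have hv: "h (x (Suc j)) = ereal (hv (Suc j))" for j
  proof -
    have "x (Suc j) = prox (lam j) h (x j - lam j *\<^sub>R g (x j))"
      using lam[of j] by (simp add: x_Suc grad_map_step_eq_prox)
    then show ?thesis
      using prox_finite[OF pr cl cv lam[of j]] unfolding hv_def by (metis real_of_ereal.simps(1))
  qed
  have "h xs \<noteq> \<infinity>" using minim[of "x 1"] hv[of 0] by auto
  then obtain hs where hs: "h xs = ereal hs" using proper_fun_finite[OF pr] by blast
  have three_point: "f (x (Suc j)) + hv (Suc j)
      \<le> f u + z + ((norm (x j - u))\<^sup>2 - (norm (x (Suc j) - u))\<^sup>2) / (2 * lam j)"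
    if "h u = ereal z" for j u z
    using proximal_gradient_three_point[OF cvf d pr cl cv lam ls, folded x_Suc, OF hv that] .
  define e where "e j = f (x j) + hv j - (f xs + hs)" for j
  define r where "r j = (norm (x j - xs))\<^sup>2" for j
  have "e k \<le> r 0 / (2 * c) / real k"
  proof (rule telescoping_sublinear_rate[OF _ _ c _ _ k])
    fix j
    have "- (norm (x (Suc (Suc j)) - x (Suc j)))\<^sup>2 / (2 * lam (Suc j)) \<le> 0"
      using lam[of "Suc j"] by simp
    then show "e (Suc (Suc j)) \<le> e (Suc j)"
      using three_point[OF hv[of j], of "Suc j"] by (simp add: e_def)
    show "0 \<le> e (Suc j)" using minim[of "x (Suc j)"] hs hv[of j] by (simp add: e_def)
    show "lam j * e (Suc j) \<le> (r j - r (Suc j)) / 2"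
      using three_point[OF hs, of j] lam[of j] by (simp add: e_def r_def field_simps)
    show "0 \<le> r j" by (simp add: r_def)
  qed
  moreover obtain k' where "k = Suc k'" using k by (cases k) auto
  ultimately show ?thesis using hv[of k'] hs x0 by (simp add: e_def r_def)
qed

theorem theorem2p2:
  fixes L :: real and x0 xs :: "'a::euclidean_space"
  assumes "L > 0"
  shows "(\<forall>f gradf h. setting f gradf h L xs \<longrightarrow> (\<forall>x. LS f gradf h x (1 / (3 * L))))
       \<and> (\<forall>f gradf h x lam. setting f gradf h L xs \<and> ls_iterates f gradf h x0 x lam
             \<longrightarrow> (\<forall>k. lam k \<ge> 1 / (3 * L)))
       \<and> (\<exists>D::real. \<forall>f gradf h x lam. setting f gradf h L xs \<and> ls_iterates f gradf h x0 x lam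
             \<longrightarrow> (\<forall>k\<ge>1. (ereal (f (x k)) + h (x k)) - (ereal (f xs) + h xs) \<le> ereal (D / real k)))"
proof -
  have LS: "LS f gradf h x (1 / (3 * L))" if "setting f gradf h L xs" for f gradf h x
    using LS_at_inverse_3L[OF _ _ assms] that unfolding setting_def by blast
  have lam_lower: "1 / (3 * L) \<le> lam k"
    if "setting f gradf h L xs" "ls_iterates f gradf h x0 x lam" for f gradf h x lam k
    using LS[OF that(1)] that(2) assms unfolding ls_iterates_def by simp
  have "(ereal (f (x k)) + h (x k)) - (ereal (f xs) + h xs)
          \<le> ereal ((norm (x0 - xs))\<^sup>2 / (2 * (1 / (3 * L))) / real k)"
    if "setting f gradf h L xs" "ls_iterates f gradf h x0 x lam" "1 \<le> k" for f gradf h x lam k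
    using ls_iterates_rate[OF that(1,2) _ lam_lower[OF that(1,2)] that(3)] assms by simp
  with LS lam_lower show ?thesis by blast
qed

end
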